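(* Let $\gamma>1$ and $0<\alpha<\frac12$, and let $\bar\rho\ge0$. Let $(\rho,u)$ be a smooth solution of $\rho_t+(\rho u)_x=0$, $(\rho u)_t+(\rho u^2+\rho^\gamma)_x=(\rho^\alpha u_x)_x$ on $\mathbb R\times[0,T]$ with $\rho>0$, and with $\rho-\bar\rho$, $u$ and their derivatives decaying at $|x|\to\infty$ fast enough that all spatial boundary terms vanish. Then $$\sup_{t\in[0,T]}\int_{\mathbb R}\Big\{\rho|u|^2+\Big[\Big(\tfrac{\rho^{\alpha-1/2}}{\alpha-1/2}\Big)_x\Big]^2+\rho\Psi(\rho,\bar\rho)\Big\}(x,t)dx+\int_0^T\!\!\int_{\mathbb R}\Big\{\rho^\alpha u_x^2+\big[(\rho^{\frac{\alpha+\gamma-1}{2}}-\bar\rho^{\frac{\alpha+\gamma-1}{2}})_x\big]^2\Big\}dxdt\le C,$$ where $C$ depends only on $\alpha,\gamma$ and on $\int_{\mathbb R}\{\rho|u|^2+[(\rho^{\alpha-1/2})_x]^2+\rho\Psi(\rho,\bar\rho)\}(x,0)dx$, and is independent of $T$.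
   Context: $\Psi(\rho,\bar\rho)=\int_{\bar\rho}^{\rho}\frac{s^\gamma-\bar\rho^\gamma}{s^2}ds$, so that $\rho\Psi(\rho,\bar\rho)=\frac{1}{\gamma-1}[\rho^\gamma-\bar\rho^\gamma-\gamma\bar\rho^{\gamma-1}(\rho-\bar\rho)]\ge0$. *)

theory Defs
  imports "HOL-Analysis.Analysis"
begin

definition px :: "(real \<Rightarrow> real \<Rightarrow> real) \<Rightarrow> real \<Rightarrow> real \<Rightarrow> real" where
  "px f x t = deriv (\<lambda>y. f y t) x"

definition pt :: "(real \<Rightarrow> real \<Rightarrow> real) \<Rightarrow> real \<Rightarrow> real \<Rightarrow> real" where
  "pt f x t = deriv (\<lambda>s. f x s) t"

fun dop :: "bool list \<Rightarrow> (real \<Rightarrow> real \<Rightarrow> real) \<Rightarrow> real \<Rightarrow> real \<Rightarrow> real" where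
  "dop [] f = f"
| "dop (b # w) f = (if b then px else pt) (dop w f)"

definition smooth2 :: "(real \<Rightarrow> real \<Rightarrow> real) \<Rightarrow> bool" where
  "smooth2 f \<longleftrightarrow> (\<forall>w. continuous_on UNIV (\<lambda>z::real\<times>real. dop w f (fst z) (snd z))
      \<and> (\<forall>x t. (\<lambda>y. dop w f y t) differentiable (at x)
             \<and> (\<lambda>s. dop w f x s) differentiable (at t)))"

text \<open>Psi(rho, rhobar) = int_{rhobar}^{rho} (s^gamma - rhobar^gamma)/s^2 ds (oriented integral).\<close>
definition Psi :: "real \<Rightarrow> real \<Rightarrow> real \<Rightarrow> real" where
  "Psi \<gamma> r rb = (LBINT s=ereal rb..ereal r. (s powr \<gamma> - rb powr \<gamma>) / s\<^sup>2)"

definition NS_solution :: "real \<Rightarrow> real \<Rightarrow> real \<Rightarrow> (real \<Rightarrow> real \<Rightarrow> real) \<Rightarrow> (real \<Rightarrow> real \<Rightarrow> real) \<Rightarrow> bool" where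
  "NS_solution \<alpha> \<gamma> T \<rho> u \<longleftrightarrow>
     (\<forall>x t. t \<in> {0..T} \<longrightarrow>
        pt \<rho> x t + px (\<lambda>x t. \<rho> x t * u x t) x t = 0
      \<and> pt (\<lambda>x t. \<rho> x t * u x t) x t
          + px (\<lambda>x t. \<rho> x t * (u x t)\<^sup>2 + \<rho> x t powr \<gamma>) x t
        = px (\<lambda>x t. \<rho> x t powr \<alpha> * px u x t) x t)"

text \<open>Spatial boundary terms: the fluxes of the energy identity and of the BD-entropy
  identity (with v = u + rho^(alpha-2) rho_x).  "Decay fast enough that all spatial boundary
  terms vanish" is made precise as: these fluxes tend to 0 as x \<rightarrow> \<plusminus>\<infinity> for every
  t in [0,T], and the time derivatives of the densities and the x-derivatives of the fluxes
  are Lebesgue integrable on R x [0,T] (so the formal integrations by parts are legitimate).\<close>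
definition Gd :: "real \<Rightarrow> real \<Rightarrow> (real \<Rightarrow> real \<Rightarrow> real) \<Rightarrow> real \<Rightarrow> real \<Rightarrow> real" where
  "Gd \<gamma> rb \<rho> x t = \<rho> x t * Psi \<gamma> (\<rho> x t) rb"

definition BDv :: "real \<Rightarrow> (real \<Rightarrow> real \<Rightarrow> real) \<Rightarrow> (real \<Rightarrow> real \<Rightarrow> real) \<Rightarrow> real \<Rightarrow> real \<Rightarrow> real" where
  "BDv \<alpha> \<rho> u x t = u x t + \<rho> x t powr (\<alpha> - 2) * px \<rho> x t"

definition boundary_terms_vanish ::
  "real \<Rightarrow> real \<Rightarrow> real \<Rightarrow> real \<Rightarrow> (real \<Rightarrow> real \<Rightarrow> real) \<Rightarrow> (real \<Rightarrow> real \<Rightarrow> real) \<Rightarrow> bool" where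
  "boundary_terms_vanish \<alpha> \<gamma> rb T \<rho> u \<longleftrightarrow>
    (let e1 = (\<lambda>x t. \<rho> x t * (u x t)\<^sup>2 / 2 + Gd \<gamma> rb \<rho> x t);
         e2 = (\<lambda>x t. \<rho> x t * (BDv \<alpha> \<rho> u x t)\<^sup>2 / 2 + Gd \<gamma> rb \<rho> x t);
         F1 = (\<lambda>x t. \<rho> x t * (u x t)^3 / 2
                    + u x t * (Gd \<gamma> rb \<rho> x t + \<rho> x t powr \<gamma> - rb powr \<gamma>)
                    - \<rho> x t powr \<alpha> * u x t * px u x t);
         F2 = (\<lambda>x t. \<rho> x t * u x t * (BDv \<alpha> \<rho> u x t)\<^sup>2 / 2
                    + u x t * (Gd \<gamma> rb \<rho> x t + \<rho> x t powr \<gamma> - rb powr \<gamma>))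
     in (\<forall>t\<in>{0..T}. ((\<lambda>x. F1 x t) \<longlongrightarrow> 0) at_top \<and> ((\<lambda>x. F1 x t) \<longlongrightarrow> 0) at_bot
                   \<and> ((\<lambda>x. F2 x t) \<longlongrightarrow> 0) at_top \<and> ((\<lambda>x. F2 x t) \<longlongrightarrow> 0) at_bot)
      \<and> set_integrable lborel (UNIV \<times> {0..T}) (\<lambda>z::real\<times>real. pt e1 (fst z) (snd z))
      \<and> set_integrable lborel (UNIV \<times> {0..T}) (\<lambda>z::real\<times>real. pt e2 (fst z) (snd z))
      \<and> set_integrable lborel (UNIV \<times> {0..T}) (\<lambda>z::real\<times>real. px F1 (fst z) (snd z))
      \<and> set_integrable lborel (UNIV \<times> {0..T}) (\<lambda>z::real\<times>real. px F2 (fst z) (snd z)))"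

end

theory Submission
  imports Defs
begin

(* Two conserved-up-to-dissipation quantities drive the proof:
     e1 = rho u^2/2 + rho Psi(rho)          (physical energy),
     e2 = rho v^2/2 + rho Psi(rho),  v = u + rho^(alpha-2) rho_x   (BD entropy).
   Each satisfies a pointwise local balance e_t + F_x = -D with D >= 0, namely
   D1 = rho^alpha u_x^2 and D2 = gamma rho^(gamma-1) rho^(alpha-2) rho_x^2.
   Integrating over R x [0,t] (the flux integrates to zero because it vanishes at
   infinity) gives  int e(t) + int_0^t int D = int e(0).  Finally the quantities of the
   theorem are compared pointwise with e1 + e2, D1 + D2 and the initial functional,
   with constants depending only on alpha and gamma. *)

text \<open>The potential energy density \<open>\<Psi>\<close>: closed form for \<open>\<bar>\<rho> = 0\<close>, derivative in \<open>\<rho>\<close>,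
  and nonnegativity (it is an integral of a function with the sign of \<open>s - \<bar>\<rho>\<close>).\<close>

lemma Psi_at_zero_density:
  assumes g: "\<gamma> > 1" and r: "r > 0"
  shows "Psi \<gamma> r 0 = r powr (\<gamma> - 1) / (\<gamma> - 1)"
proof -
  let ?f = "\<lambda>s::real. (s powr \<gamma> - 0 powr \<gamma>) / s\<^sup>2"
  let ?F = "\<lambda>s::real. s powr (\<gamma> - 1) / (\<gamma> - 1)"
  have "(LBINT s=ereal 0..ereal r. ?f s) = ?F r - 0"
  proof (rule interval_integral_FTC_nonneg(2))
    show "ereal 0 < ereal r" using r by simp
    fix x assume "ereal 0 < ereal x" "ereal x < ereal r"
    then have x0: "x > 0" by simp
    have "DERIV ?F x :> (\<gamma> - 1) * x powr (\<gamma> - 1 - 1) / (\<gamma> - 1)"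
      using x0 by (intro DERIV_cdivide has_real_derivative_powr) auto
    moreover have "(\<gamma> - 1) * x powr (\<gamma> - 1 - 1) / (\<gamma> - 1) = ?f x"
      using x0 g by (simp add: powr_diff)
    ultimately show "DERIV ?F x :> ?f x" by simp
    show "isCont ?f x" using x0 by (intro continuous_intros) auto
  next
    show "AE x in lborel. ereal 0 < ereal x \<longrightarrow> ereal x < ereal r \<longrightarrow> 0 \<le> ?f x"
      by (auto intro!: AE_I2)
    have "((\<lambda>s::real. s powr (\<gamma> - 1)) \<longlongrightarrow> 0 powr (\<gamma> - 1)) (at_right 0)"
    proof (rule tendsto_powr')
      show "0 \<noteq> (0::real) \<or> (\<gamma> - 1 > 0 \<and> eventually (\<lambda>x. x \<ge> (0::real)) (at_right 0))"
        using g eventually_at_right_less[of "0::real"] by (auto elim: eventually_mono)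
    qed (auto intro: tendsto_intros)
    from tendsto_divide[OF this tendsto_const, of "\<gamma> - 1"]
    have "(?F \<longlongrightarrow> 0) (at_right 0)" using g by simp
    then show "((?F \<circ> real_of_ereal) \<longlongrightarrow> 0) (at_right (ereal 0))"
      unfolding ereal_tendsto_simps1 .
    have "isCont ?F r" using r g by (intro continuous_intros) auto
    then have "(?F \<longlongrightarrow> ?F r) (at_left r)"
      by (simp add: isCont_def filterlim_at_split)
    then show "((?F \<circ> real_of_ereal) \<longlongrightarrow> ?F r) (at_left (ereal r))"
      unfolding ereal_tendsto_simps1 .
  qed
  then show ?thesis unfolding Psi_def by simp
qed

text \<open>For \<open>\<bar>\<rho> > 0\<close> the integrand is continuous near \<open>[\<bar>\<rho>, r]\<close>, so the fundamental theorem
  of calculus for the oriented integral applies.\<close>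

lemma Psi_has_derivative_pos_density:
  assumes rb: "rb > 0" and r: "r > 0"
  shows "DERIV (\<lambda>r. Psi \<gamma> r rb) r :> (r powr \<gamma> - rb powr \<gamma>) / r\<^sup>2"
proof -
  let ?f = "\<lambda>s::real. (s powr \<gamma> - rb powr \<gamma>) / s\<^sup>2"
  define a where "a = min rb r / 2"
  define b where "b = max rb r + 1"
  have a0: "a > 0" using rb r by (simp add: a_def)
  have cont: "continuous_on {a..b} ?f"
    using a0 by (intro continuous_intros) auto
  have "((\<lambda>v. LBINT y=rb..v. ?f y) has_vector_derivative (?f r)) (at r within {a..b})"
    by (rule interval_integral_FTC2[OF _ _ cont]) (use rb r in \<open>auto simp: a_def b_def\<close>)
  then have "((\<lambda>v. LBINT y=rb..v. ?f y) has_vector_derivative (?f r)) (at r within {a<..<b})"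
    by (rule has_vector_derivative_within_subset) auto
  then have "((\<lambda>v. LBINT y=rb..v. ?f y) has_vector_derivative (?f r)) (at r)"
    by (subst (asm) has_vector_derivative_within_open) (use rb r in \<open>auto simp: a_def b_def\<close>)
  then show ?thesis
    unfolding Psi_def has_real_derivative_iff_has_vector_derivative .
qed

lemma Psi_has_derivative:
  assumes g: "\<gamma> > 1" and rb: "rb \<ge> 0" and r: "r > 0"
  shows "DERIV (\<lambda>r. Psi \<gamma> r rb) r :> (r powr \<gamma> - rb powr \<gamma>) / r\<^sup>2"
proof (cases "rb = 0")
  case False
  then show ?thesis using Psi_has_derivative_pos_density[OF _ r] rb by simp
next
  case True
  have d: "DERIV (\<lambda>s. s powr (\<gamma> - 1) / (\<gamma> - 1)) r :> (\<gamma> - 1) * r powr (\<gamma> - 1 - 1) / (\<gamma> - 1)"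
    using r by (intro DERIV_cdivide has_real_derivative_powr)
  have e: "(\<gamma> - 1) * r powr (\<gamma> - 1 - 1) / (\<gamma> - 1) = (r powr \<gamma> - rb powr \<gamma>) / r\<^sup>2"
    using r g True by (simp add: powr_diff)
  show ?thesis
    by (rule has_field_derivative_transform_within_open[OF d[unfolded e], of "{0<..}"])
       (use r g True Psi_at_zero_density in auto)
qed

lemma Psi_nonneg:
  assumes g: "\<gamma> > 1" and rb: "rb \<ge> 0" and r: "r > 0"
  shows "Psi \<gamma> r rb \<ge> 0"
proof (cases "rb = 0")
  case True
  then show ?thesis using Psi_at_zero_density[OF g r] g r by simp
next
  case False
  then have rb0: "rb > 0" using rb by simp
  have Psi_rb: "Psi \<gamma> rb rb = 0" unfolding Psi_def by simp
  have D: "\<And>x. x > 0 \<Longrightarrow> DERIV (\<lambda>r. Psi \<gamma> r rb) x :> (x powr \<gamma> - rb powr \<gamma>) / x\<^sup>2"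
    using Psi_has_derivative[OF g rb] by blast
  consider "r = rb" | "r > rb" | "r < rb" by linarith
  then show ?thesis
  proof cases
    case 1 then show ?thesis using Psi_rb by simp
  next
    case 2
    obtain z where z: "rb < z" "z < r"
      "Psi \<gamma> r rb - Psi \<gamma> rb rb = (r - rb) * ((z powr \<gamma> - rb powr \<gamma>) / z\<^sup>2)"
      using MVT2[OF 2, of "\<lambda>r. Psi \<gamma> r rb" "\<lambda>x. (x powr \<gamma> - rb powr \<gamma>) / x\<^sup>2"] D rb0 by force
    have "z powr \<gamma> \<ge> rb powr \<gamma>" using z rb0 g by (intro powr_mono2) auto
    then show ?thesis using z Psi_rb 2 by simp
  next
    case 3
    obtain z where z: "r < z" "z < rb"
      "Psi \<gamma> rb rb - Psi \<gamma> r rb = (rb - r) * ((z powr \<gamma> - rb powr \<gamma>) / z\<^sup>2)"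
      using MVT2[OF 3, of "\<lambda>r. Psi \<gamma> r rb" "\<lambda>x. (x powr \<gamma> - rb powr \<gamma>) / x\<^sup>2"] D r by force
    have "z powr \<gamma> \<le> rb powr \<gamma>" using z r g by (intro powr_mono2) auto
    then have "(rb - r) * ((z powr \<gamma> - rb powr \<gamma>) / z\<^sup>2) \<le> 0"
      using 3 by (intro mult_nonneg_nonpos divide_nonpos_nonneg) auto
    then show ?thesis using z Psi_rb by simp
  qed
qed

definition potential_deriv :: "real \<Rightarrow> real \<Rightarrow> real \<Rightarrow> real" where
  "potential_deriv \<gamma> rb r = Psi \<gamma> r rb + (r powr \<gamma> - rb powr \<gamma>) / r"

lemma potential_has_derivative:
  assumes g: "\<gamma> > 1" and rb: "rb \<ge> 0" and r: "r > 0"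
  shows "DERIV (\<lambda>r. r * Psi \<gamma> r rb) r :> potential_deriv \<gamma> rb r"
proof -
  have "DERIV (\<lambda>r. r * Psi \<gamma> r rb) r :> 1 * Psi \<gamma> r rb + ((r powr \<gamma> - rb powr \<gamma>) / r\<^sup>2) * r"
    by (rule DERIV_mult[OF DERIV_ident Psi_has_derivative[OF g rb r]])
  moreover have "1 * Psi \<gamma> r rb + ((r powr \<gamma> - rb powr \<gamma>) / r\<^sup>2) * r = potential_deriv \<gamma> rb r"
    using r by (simp add: potential_deriv_def power2_eq_square)
  ultimately show ?thesis by simp
qed

lemma px_eqI: "((\<lambda>y. f y s) has_real_derivative D) (at x) \<Longrightarrow> px f x s = D"
  by (simp add: px_def DERIV_imp_deriv)

lemma pt_eqI: "((\<lambda>s. f x s) has_real_derivative D) (at s) \<Longrightarrow> pt f x s = D"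
  by (simp add: pt_def DERIV_imp_deriv)

lemma smooth2_has_px:
  "smooth2 f \<Longrightarrow> ((\<lambda>y. dop w f y t) has_real_derivative px (dop w f) x t) (at x)"
  unfolding smooth2_def px_def using DERIV_deriv_iff_real_differentiable by blast

lemma smooth2_has_pt:
  "smooth2 f \<Longrightarrow> ((\<lambda>s. dop w f x s) has_real_derivative pt (dop w f) x t) (at t)"
  unfolding smooth2_def pt_def using DERIV_deriv_iff_real_differentiable by blast

lemma smooth2_isCont: "smooth2 f \<Longrightarrow> isCont (\<lambda>z. dop w f (fst z) (snd z)) z"
  unfolding smooth2_def by (cases z) (simp add: continuous_on_eq_continuous_at)

lemma second_difference_mvt:
  fixes f fx fxt :: "real \<Rightarrow> real \<Rightarrow> real"
  assumes dx: "\<And>y s. ((\<lambda>y. f y s) has_real_derivative fx y s) (at y)"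
    and dxt: "\<And>y s. ((\<lambda>s. fx y s) has_real_derivative fxt y s) (at s)"
    and h: "h > 0"
  obtains \<xi> \<tau> where "x < \<xi>" "\<xi> < x + h" "t < \<tau>" "\<tau> < t + h"
    "f (x+h) (t+h) - f (x+h) t - f x (t+h) + f x t = h * h * fxt \<xi> \<tau>"
proof -
  have hx: "x < x + h" and ht: "t < t + h" using h by auto
  obtain \<xi> where \<xi>: "x < \<xi>" "\<xi> < x + h"
    "(f (x+h) (t+h) - f (x+h) t) - (f x (t+h) - f x t) = (x + h - x) * (fx \<xi> (t+h) - fx \<xi> t)"
    using MVT2[OF hx, of "\<lambda>y. f y (t+h) - f y t" "\<lambda>y. fx y (t+h) - fx y t"] dx
    by (force intro: derivative_intros)
  obtain \<tau> where \<tau>: "t < \<tau>" "\<tau> < t + h" "fx \<xi> (t+h) - fx \<xi> t = (t + h - t) * fxt \<xi> \<tau>"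
    using MVT2[OF ht, of "\<lambda>s. fx \<xi> s" "\<lambda>s. fxt \<xi> s"] dxt by force
  show ?thesis using \<xi> \<tau> by (intro that[of \<xi> \<tau>]) (auto simp: algebra_simps)
qed

lemma isCont_eq_if_approached:
  fixes A B :: "'a::metric_space \<Rightarrow> real"
  assumes cA: "isCont A p" and cB: "isCont B p"
    and approx: "\<And>d. d > 0 \<Longrightarrow> \<exists>a b. dist a p < d \<and> dist b p < d \<and> A a = B b"
  shows "A p = B p"
proof (rule ccontr)
  assume "A p \<noteq> B p"
  then have e: "\<bar>A p - B p\<bar> / 2 > 0" by simp
  obtain d1 where d1: "d1 > 0" "\<And>z. dist z p < d1 \<Longrightarrow> dist (A z) (A p) < \<bar>A p - B p\<bar> / 2"
    using cA e unfolding continuous_at_eps_delta by (metis dist_commute)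
  obtain d2 where d2: "d2 > 0" "\<And>z. dist z p < d2 \<Longrightarrow> dist (B z) (B p) < \<bar>A p - B p\<bar> / 2"
    using cB e unfolding continuous_at_eps_delta by (metis dist_commute)
  obtain a b where ab: "dist a p < min d1 d2" "dist b p < min d1 d2" "A a = B b"
    using approx[of "min d1 d2"] d1 d2 by auto
  have "\<bar>A a - A p\<bar> < \<bar>A p - B p\<bar> / 2" "\<bar>B b - B p\<bar> < \<bar>A p - B p\<bar> / 2"
    using d1(2)[of a] d2(2)[of b] ab by (auto simp: dist_real_def)
  moreover have "A p - B p = (A p - A a) + (B b - B p)" using ab(3) by simp
  then have "\<bar>A p - B p\<bar> \<le> \<bar>A a - A p\<bar> + \<bar>B b - B p\<bar>"
    using abs_triangle_ineq[of "A p - A a" "B b - B p"] by (simp add: abs_minus_commute)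
  ultimately show False using field_sum_of_halves[of "\<bar>A p - B p\<bar>"] by linarith
qed

text \<open>Symmetry of mixed partial derivatives (Schwarz): in every small square at \<open>(x,t)\<close> the
  second difference equals \<open>h\<^sup>2\<close> times either mixed partial at some point, so the two
  continuous mixed partials agree at points arbitrarily close to \<open>(x,t)\<close>.\<close>

lemma smooth2_mixed_partials:
  assumes sm: "smooth2 f"
  shows "pt (px f) x t = px (pt f) x t"
proof -
  let ?A = "\<lambda>z. pt (px f) (fst z) (snd z)"
  let ?B = "\<lambda>z. px (pt f) (fst z) (snd z)"
  have "?A (x, t) = ?B (x, t)"
  proof (rule isCont_eq_if_approached[where A="?A" and B="?B"])
    show "isCont ?A (x, t)" using smooth2_isCont[OF sm, where w="[False, True]"] by simp
    show "isCont ?B (x, t)" using smooth2_isCont[OF sm, where w="[True, False]"] by simp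
    fix d :: real assume d: "d > 0"
    define h where "h = d / 2"
    have h0: "h > 0" using d by (simp add: h_def)
    have close: "dist (a, b) (x, t) < d" if "x < a" "a < x + h" "t < b" "b < t + h" for a b
    proof -
      have "dist (a, b) (x, t) \<le> \<bar>a - x\<bar> + \<bar>b - t\<bar>"
        unfolding dist_Pair_Pair dist_real_def
        using sqrt_sum_squares_le_sum_abs[of "a - x" "b - t"] by simp
      then show ?thesis using that unfolding h_def by linarith
    qed
    obtain \<xi> \<tau> where \<xi>\<tau>: "x < \<xi>" "\<xi> < x + h" "t < \<tau>" "\<tau> < t + h"
      "f (x+h) (t+h) - f (x+h) t - f x (t+h) + f x t = h * h * pt (px f) \<xi> \<tau>"
      by (rule second_difference_mvt[where f=f and fx="px f" and fxt="pt (px f)"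
            and x=x and t=t, OF _ _ h0])
         (use smooth2_has_px[OF sm, where w="[]"] smooth2_has_pt[OF sm, where w="[True]"] in auto)
    obtain \<tau>' \<xi>' where \<xi>\<tau>': "t < \<tau>'" "\<tau>' < t + h" "x < \<xi>'" "\<xi>' < x + h"
      "f (x+h) (t+h) - f x (t+h) - f (x+h) t + f x t = h * h * px (pt f) \<xi>' \<tau>'"
      by (rule second_difference_mvt[where f="\<lambda>s y. f y s" and fx="\<lambda>s y. pt f y s"
            and fxt="\<lambda>s y. px (pt f) y s" and x=t and t=x, OF _ _ h0])
         (use smooth2_has_pt[OF sm, where w="[]"] smooth2_has_px[OF sm, where w="[False]"] in auto)
    have "?A (\<xi>, \<tau>) = ?B (\<xi>', \<tau>')"
      using \<xi>\<tau>(5) \<xi>\<tau>'(5) h0 by (simp add: algebra_simps)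
    then show "\<exists>a b. dist a (x, t) < d \<and> dist b (x, t) < d \<and> ?A a = ?B b"
      using close[OF \<xi>\<tau>(1-4)] close[OF \<xi>\<tau>'(3,4,1,2)] by blast
  qed
  then show ?thesis by simp
qed

lemma integral_derivative_of_vanishing:
  fixes F f :: "real \<Rightarrow> real"
  assumes d: "\<And>x. (F has_real_derivative f x) (at x)" and c: "\<And>x. isCont f x"
    and i: "integrable lborel f" and top: "(F \<longlongrightarrow> 0) at_top" and bot: "(F \<longlongrightarrow> 0) at_bot"
  shows "integral\<^sup>L lborel f = 0"
proof -
  have "(LBINT x=-\<infinity>..\<infinity>. f x) = 0 - 0"
  proof (rule interval_integral_FTC_integrable[where F=F])
    show "set_integrable lborel (einterval (- \<infinity>) \<infinity>) f"
      using i by (simp add: set_integrable_def)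
    show "((F \<circ> real_of_ereal) \<longlongrightarrow> 0) (at_right (- \<infinity>))"
      using bot by (simp add: ereal_tendsto_simps1)
    show "((F \<circ> real_of_ereal) \<longlongrightarrow> 0) (at_left \<infinity>)"
      using top by (simp add: ereal_tendsto_simps1)
  qed (use d c in \<open>auto simp: has_real_derivative_iff_has_vector_derivative\<close>)
  then show ?thesis
    by (simp add: interval_lebesgue_integral_def set_lebesgue_integral_def)
qed

lemma strip_integrable:
  fixes g :: "real \<Rightarrow> real \<Rightarrow> real"
  assumes ig: "set_integrable lborel (UNIV \<times> {0..T}) (\<lambda>z. g (fst z) (snd z))" and t: "t \<le> T"
  shows "integrable (lborel \<Otimes>\<^sub>M lborel) (\<lambda>(x, s). indicator {0..t} s * g x s)"
proof -
  have sS: "UNIV \<times> {0..t} \<in> sets (lborel :: (real \<times> real) measure)"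
    by (simp, intro borel_closed closed_Times) auto
  have "set_integrable lborel (UNIV \<times> {0..t}) (\<lambda>z. g (fst z) (snd z))"
    by (rule set_integrable_subset[OF ig sS]) (use t in auto)
  moreover have "(\<lambda>z::real\<times>real. indicator (UNIV \<times> {0..t}) z *\<^sub>R g (fst z) (snd z))
      = (\<lambda>(x, s). indicator {0..t} s * g x s)"
    by (auto split: split_indicator)
  ultimately show ?thesis by (simp add: set_integrable_def lborel_prod)
qed

lemma strip_integral_flux:
  fixes F h :: "real \<Rightarrow> real \<Rightarrow> real"
  assumes t: "t \<le> T"
    and dF: "\<And>x s. s \<in> {0..T} \<Longrightarrow> ((\<lambda>x. F x s) has_real_derivative h x s) (at x)"
    and hc: "\<And>x s. s \<in> {0..T} \<Longrightarrow> isCont (\<lambda>x. h x s) x"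
    and lim: "\<And>s. s \<in> {0..T} \<Longrightarrow> ((\<lambda>x. F x s) \<longlongrightarrow> 0) at_top \<and> ((\<lambda>x. F x s) \<longlongrightarrow> 0) at_bot"
    and ih: "set_integrable lborel (UNIV \<times> {0..T}) (\<lambda>z. h (fst z) (snd z))"
  shows "integral\<^sup>L (lborel \<Otimes>\<^sub>M lborel) (\<lambda>(x, s). indicator {0..t} s * h x s) = 0"
proof -
  have slice: "(\<integral>x. indicator {0..t} s * h x s \<partial>lborel) = 0" for s
  proof (cases "s \<in> {0..t} \<and> integrable lborel (\<lambda>x. h x s)")
    case True
    then have "s \<in> {0..T}" using t by auto
    then have "(\<integral>x. h x s \<partial>lborel) = 0"
      by (intro integral_derivative_of_vanishing[where F="\<lambda>x. F x s"]) (use True dF hc lim in auto)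
    then show ?thesis using True by simp
  next
    case False
    then show ?thesis by (auto simp: not_integrable_integral_eq)
  qed
  have "integral\<^sup>L (lborel \<Otimes>\<^sub>M lborel) (\<lambda>(x, s). indicator {0..t} s * h x s)
      = (\<integral>s. (\<integral>x. indicator {0..t} s * h x s \<partial>lborel) \<partial>lborel)"
    using lborel_pair.integral_snd[OF strip_integrable[OF ih t]] by simp
  also have "\<dots> = 0" by (simp only: slice) simp
  finally show ?thesis .
qed

lemma strip_integral_time_derivative:
  fixes e g :: "real \<Rightarrow> real \<Rightarrow> real"
  assumes t: "0 \<le> t" "t \<le> T"
    and de: "\<And>x s. s \<in> {0..T} \<Longrightarrow> ((\<lambda>s. e x s) has_real_derivative g x s) (at s)"
    and ig: "set_integrable lborel (UNIV \<times> {0..T}) (\<lambda>z. g (fst z) (snd z))"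
    and mt: "(\<lambda>x. e x t) \<in> borel_measurable lborel"
    and i0: "integrable lborel (\<lambda>x. e x 0)"
  shows "integrable lborel (\<lambda>x. e x t)"
    and "integral\<^sup>L (lborel \<Otimes>\<^sub>M lborel) (\<lambda>(x, s). indicator {0..t} s * g x s)
         = (\<integral>x. e x t \<partial>lborel) - (\<integral>x. e x 0 \<partial>lborel)"
proof -
  let ?G = "\<lambda>(x, s). indicator {0..t} s * g x s"
  have IG: "integrable (lborel \<Otimes>\<^sub>M lborel) ?G" by (rule strip_integrable[OF ig t(2)])
  have ftc: "(\<integral>s. indicator {0..t} s * g x s \<partial>lborel) = e x t - e x 0"
    if i: "integrable lborel (\<lambda>s. indicator {0..t} s * g x s)" for x
  proof -
    have "(g x has_integral (e x t - e x 0)) {0..t}"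
    proof (rule fundamental_theorem_of_calculus[OF t(1)])
      fix s assume "s \<in> {0..t}"
      then have "s \<in> {0..T}" using t by auto
      then show "((\<lambda>s. e x s) has_vector_derivative g x s) (at s within {0..t})"
        using de[of s x]
        by (simp add: has_real_derivative_iff_has_vector_derivative has_vector_derivative_at_within)
    qed
    moreover have "set_integrable lborel {0..t} (g x)"
      using i by (simp add: set_integrable_def)
    then have "(LINT s:{0..t}|lborel. g x s) = integral {0..t} (g x)"
      by (rule set_borel_integral_eq_integral(2))
    ultimately show ?thesis
      by (simp add: set_lebesgue_integral_def integral_unique)
  qed
  have AE_ftc: "AE x in lborel. (\<integral>s. indicator {0..t} s * g x s \<partial>lborel) = e x t - e x 0"
    using lborel_pair.AE_integrable_fst[OF IG] by eventually_elim (use ftc in simp)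
  have m0: "(\<lambda>x. e x 0) \<in> borel_measurable lborel" using i0 by auto
  have idiff: "integrable lborel (\<lambda>x. e x t - e x 0)"
  proof (rule integrable_cong_AE_imp[OF lborel_pair.integrable_fst[OF IG]])
    show "(\<lambda>x. e x t - e x 0) \<in> borel_measurable lborel" using mt m0 by measurable
  qed (use AE_ftc in simp)
  have "integrable lborel (\<lambda>x. (e x t - e x 0) + e x 0)"
    using Bochner_Integration.integrable_add[OF idiff i0] .
  then show it: "integrable lborel (\<lambda>x. e x t)" by simp
  have "integral\<^sup>L (lborel \<Otimes>\<^sub>M lborel) ?G = (\<integral>x. (\<integral>s. indicator {0..t} s * g x s \<partial>lborel) \<partial>lborel)"
    using lborel_pair.integral_fst[OF IG] by simp
  also have "\<dots> = (\<integral>x. e x t - e x 0 \<partial>lborel)"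
    by (rule integral_cong_AE) (use AE_ftc lborel_pair.integrable_fst[OF IG] mt m0 in auto)
  also have "\<dots> = (\<integral>x. e x t \<partial>lborel) - (\<integral>x. e x 0 \<partial>lborel)"
    using it i0 by simp
  finally show "integral\<^sup>L (lborel \<Otimes>\<^sub>M lborel) ?G = (\<integral>x. e x t \<partial>lborel) - (\<integral>x. e x 0 \<partial>lborel)" .
qed

lemma strip_nn_integral_eq_integral:
  fixes D :: "real \<Rightarrow> real \<Rightarrow> real"
  assumes ID: "integrable (lborel \<Otimes>\<^sub>M lborel) (\<lambda>(x, s). indicator {0..t} s * D x s)"
    and D0: "\<And>x s. s \<in> {0..t} \<Longrightarrow> 0 \<le> D x s"
  shows "(\<integral>\<^sup>+s\<in>{0..t}. (\<integral>\<^sup>+x. ennreal (D x s) \<partial>lborel) \<partial>lborel)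
      = ennreal (integral\<^sup>L (lborel \<Otimes>\<^sub>M lborel) (\<lambda>(x, s). indicator {0..t} s * D x s))"
proof -
  let ?D = "\<lambda>(x, s). indicator {0..t} s * D x s"
  have "(\<integral>\<^sup>+s\<in>{0..t}. (\<integral>\<^sup>+x. ennreal (D x s) \<partial>lborel) \<partial>lborel)
      = (\<integral>\<^sup>+s. (\<integral>\<^sup>+x. ennreal (?D (x, s)) \<partial>lborel) \<partial>lborel)"
    by (intro nn_integral_cong) (auto split: split_indicator)
  also have "\<dots> = (\<integral>\<^sup>+z. ennreal (?D z) \<partial>(lborel \<Otimes>\<^sub>M lborel))"
    using lborel_pair.nn_integral_snd[of "\<lambda>z. ennreal (?D z)"] ID by simp
  also have "\<dots> = ennreal (integral\<^sup>L (lborel \<Otimes>\<^sub>M lborel) ?D)"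
    by (rule nn_integral_eq_integral[OF ID]) (auto simp: D0 split: split_indicator)
  finally show ?thesis .
qed

lemma integrated_balance_law:
  fixes e g F h D :: "real \<Rightarrow> real \<Rightarrow> real"
  assumes t: "0 \<le> t" "t \<le> T"
    and de: "\<And>x s. s \<in> {0..T} \<Longrightarrow> ((\<lambda>s. e x s) has_real_derivative g x s) (at s)"
    and dF: "\<And>x s. s \<in> {0..T} \<Longrightarrow> ((\<lambda>x. F x s) has_real_derivative h x s) (at x)"
    and hc: "\<And>x s. s \<in> {0..T} \<Longrightarrow> isCont (\<lambda>x. h x s) x"
    and balance: "\<And>x s. s \<in> {0..T} \<Longrightarrow> g x s + h x s = - D x s"
    and D0: "\<And>x s. s \<in> {0..T} \<Longrightarrow> 0 \<le> D x s"
    and e0: "\<And>x s. s \<in> {0..T} \<Longrightarrow> 0 \<le> e x s"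
    and lim: "\<And>s. s \<in> {0..T} \<Longrightarrow> ((\<lambda>x. F x s) \<longlongrightarrow> 0) at_top \<and> ((\<lambda>x. F x s) \<longlongrightarrow> 0) at_bot"
    and ig: "set_integrable lborel (UNIV \<times> {0..T}) (\<lambda>z. g (fst z) (snd z))"
    and ih: "set_integrable lborel (UNIV \<times> {0..T}) (\<lambda>z. h (fst z) (snd z))"
    and em: "\<And>s. s \<in> {0..T} \<Longrightarrow> (\<lambda>x. e x s) \<in> borel_measurable lborel"
    and fin: "(\<integral>\<^sup>+x. ennreal (e x 0) \<partial>lborel) < \<infinity>"
  shows "(\<integral>\<^sup>+x. ennreal (e x t) \<partial>lborel) + (\<integral>\<^sup>+s\<in>{0..t}. (\<integral>\<^sup>+x. ennreal (D x s) \<partial>lborel) \<partial>lborel)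
         = (\<integral>\<^sup>+x. ennreal (e x 0) \<partial>lborel)"
proof -
  let ?D = "\<lambda>(x, s). indicator {0..t} s * D x s"
  let ?G = "\<lambda>(x, s). indicator {0..t} s * g x s"
  let ?H = "\<lambda>(x, s). indicator {0..t} s * h x s"
  have IG: "integrable (lborel \<Otimes>\<^sub>M lborel) ?G" by (rule strip_integrable[OF ig t(2)])
  have IH: "integrable (lborel \<Otimes>\<^sub>M lborel) ?H" by (rule strip_integrable[OF ih t(2)])
  have D_eq: "?D = (\<lambda>z. - (?G z + ?H z))"
  proof
    fix z :: "real \<times> real"
    show "?D z = - (?G z + ?H z)"
      using balance[of "snd z" "fst z"] t
      by (cases z; cases "snd z \<in> {0..t}") (auto simp: algebra_simps)
  qed
  have ID: "integrable (lborel \<Otimes>\<^sub>M lborel) ?D"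
    unfolding D_eq using IG IH by auto
  have D_nonneg: "0 \<le> ?D z" for z
    using D0 t by (cases z) (auto split: split_indicator)
  have T0: "0 \<in> {0..T}" and tT: "t \<in> {0..T}" using t by auto
  have i0: "integrable lborel (\<lambda>x. e x 0)"
    by (rule integrableI_nonneg[OF em[OF T0]]) (use e0[OF T0] fin in auto)
  note time = strip_integral_time_derivative[OF t de ig em[OF tT] i0]
  have intD: "integral\<^sup>L (lborel \<Otimes>\<^sub>M lborel) ?D = (\<integral>x. e x 0 \<partial>lborel) - (\<integral>x. e x t \<partial>lborel)"
    unfolding D_eq using IG IH time(2) strip_integral_flux[OF t(2) dF hc lim ih] by simp
  have nnD: "(\<integral>\<^sup>+s\<in>{0..t}. (\<integral>\<^sup>+x. ennreal (D x s) \<partial>lborel) \<partial>lborel)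
      = ennreal (integral\<^sup>L (lborel \<Otimes>\<^sub>M lborel) ?D)"
    by (rule strip_nn_integral_eq_integral[OF ID]) (use D0 t in auto)
  have nnt: "(\<integral>\<^sup>+x. ennreal (e x t) \<partial>lborel) = ennreal (\<integral>x. e x t \<partial>lborel)"
    by (rule nn_integral_eq_integral[OF time(1)]) (use e0 tT in auto)
  have nn0: "(\<integral>\<^sup>+x. ennreal (e x 0) \<partial>lborel) = ennreal (\<integral>x. e x 0 \<partial>lborel)"
    by (rule nn_integral_eq_integral[OF i0]) (use e0 T0 in auto)
  have "(\<integral>x. e x t \<partial>lborel) \<ge> 0" using e0 tT by (intro integral_nonneg_AE) auto
  moreover have "integral\<^sup>L (lborel \<Otimes>\<^sub>M lborel) ?D \<ge> 0"
    using D_nonneg by (intro integral_nonneg_AE) auto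
  ultimately show ?thesis
    unfolding nnD nnt nn0 using intD
    by (simp add: ennreal_plus[symmetric] del: ennreal_plus)
qed

text \<open>Read \<open>r, rx, rxx, rt, rxt\<close> as \<open>\<rho>\<close> and its
  derivatives, \<open>U, ux, uxx, ut\<close> as \<open>u\<close> and its derivatives, \<open>P = \<rho>\<^sup>\<gamma>\<close>, \<open>P1 = \<rho>\<^sup>\<gamma>\<^sup>-\<^sup>1\<close>,
  \<open>A = \<rho>\<^sup>\<alpha>\<close>, \<open>A1 = \<rho>\<^sup>\<alpha>\<^sup>-\<^sup>1\<close>, \<open>B = \<rho>\<^sup>\<alpha>\<^sup>-\<^sup>2\<close>, \<open>B1 = \<rho>\<^sup>\<alpha>\<^sup>-\<^sup>3\<close>, \<open>S = \<Psi>(\<rho>)\<close>, \<open>Pb = \<bar>\<rho>\<^sup>\<gamma>\<close>.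
  Hypotheses \<open>rt\<close>, \<open>rxt\<close> are the continuity equation (and its \<open>x\<close>-derivative), \<open>m\<close> the
  expanded momentum equation.  The energy law: \<open>e\<^sub>1\<^sub>t + F\<^sub>1\<^sub>x = -\<rho>\<^sup>\<alpha> u\<^sub>x\<^sup>2\<close>.\<close>

lemma energy_identity_algebra:
  fixes r rx U ux uxx rt ut P P1 A A1 S Pb \<gamma> \<alpha> :: real
  assumes r: "r > 0" and rt: "rt = -(rx*U + r*ux)"
    and m: "rt*U + r*ut + rx*U^2 + 2*r*U*ux + \<gamma>*P1*rx = \<alpha>*A1*rx*ux + A*uxx"
  shows "(rt*U^2/2 + r*U*ut + (S + (P - Pb)/r)*rt)
       + (rx*U^3/2 + r*(3*U^2*ux)/2 + ux*(r*S + P - Pb) + U*((S + (P - Pb)/r)*rx + \<gamma>*P1*rx)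
          - (\<alpha>*A1*rx*U*ux + A*ux*ux + A*U*uxx)) = -(A*ux^2)"
proof -
  have rut: "r*ut = \<alpha>*A1*rx*ux + A*uxx - rt*U - rx*U^2 - 2*r*U*ux - \<gamma>*P1*rx"
    using m by linarith
  have "r*U*ut = U*(r*ut)" by simp
  then have e: "r*U*ut = U*(\<alpha>*A1*rx*ux + A*uxx - rt*U - rx*U^2 - 2*r*U*ux - \<gamma>*P1*rx)"
    unfolding rut .
  show ?thesis unfolding e rt using r by (simp add: field_simps power2_eq_square power3_eq_cube)
qed

text \<open>The BD-entropy law for \<open>e\<^sub>2\<close> built on \<open>v = u + \<rho>\<^sup>\<alpha>\<^sup>-\<^sup>2\<rho>\<^sub>x\<close>:
  \<open>e\<^sub>2\<^sub>t + F\<^sub>2\<^sub>x = -\<gamma>\<rho>\<^sup>\<gamma>\<^sup>-\<^sup>1\<rho>\<^sup>\<alpha>\<^sup>-\<^sup>2\<rho>\<^sub>x\<^sup>2\<close>.  The key fact \<open>k\<close> is that \<open>v\<close> is transported with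
  a pure pressure forcing: \<open>\<rho>(v\<^sub>t + u v\<^sub>x) = -\<gamma>\<rho>\<^sup>\<gamma>\<^sup>-\<^sup>1\<rho>\<^sub>x\<close>, the viscous terms cancel.\<close>

lemma bd_entropy_identity_algebra:
  fixes r rx rxx U ux uxx rt rxt ut P P1 A A1 B B1 S Pb \<gamma> \<alpha> :: real
  assumes r: "r > 0" and rt: "rt = -(rx*U + r*ux)" and rxt: "rxt = -(rxx*U + 2*rx*ux + r*uxx)"
    and m: "rt*U + r*ut + rx*U^2 + 2*r*U*ux + \<gamma>*P1*rx = \<alpha>*A1*rx*ux + A*uxx"
    and A: "A = r*A1" and A1: "A1 = r*B" and B: "B = r*B1"
  shows "(rt*(U + B*rx)^2/2 + r*(U + B*rx)*(ut + (\<alpha>-2)*B1*rt*rx + B*rxt) + (S + (P - Pb)/r)*rt)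
       + ((rx*U + r*ux)*(U + B*rx)^2/2 + r*U*(U + B*rx)*(ux + (\<alpha>-2)*B1*rx*rx + B*rxx)
          + ux*(r*S + P - Pb) + U*((S + (P - Pb)/r)*rx + \<gamma>*P1*rx)) = -(\<gamma>*P1*B*rx^2)"
proof -
  have k: "r*((ut + (\<alpha>-2)*B1*rt*rx + B*rxt) + U*(ux + (\<alpha>-2)*B1*rx*rx + B*rxx)) = -(\<gamma>*P1*rx)"
  proof -
    have rut: "r*ut = \<alpha>*A1*rx*ux + A*uxx - rt*U - rx*U^2 - 2*r*U*ux - \<gamma>*P1*rx" using m by linarith
    have "r*((ut + (\<alpha>-2)*B1*rt*rx + B*rxt) + U*(ux + (\<alpha>-2)*B1*rx*rx + B*rxx))
       = r*ut + r*U*ux + (\<alpha>-2)*(r*B1)*rx*(rt + U*rx) + (r*B)*(rxt + U*rxx)"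
      by (simp add: algebra_simps power2_eq_square)
    also have "\<dots> = -(\<gamma>*P1*rx)"
      unfolding rut rt rxt B[symmetric] A A1 by (simp add: algebra_simps power2_eq_square)
    finally show ?thesis .
  qed
  have pressure: "(S + (P - Pb)/r)*rt + ux*(r*S + P - Pb) + U*((S + (P - Pb)/r)*rx + \<gamma>*P1*rx)
      = \<gamma>*P1*rx*U"
    unfolding rt using r by (simp add: field_simps)
  have "(rt*(U + B*rx)^2/2 + r*(U + B*rx)*(ut + (\<alpha>-2)*B1*rt*rx + B*rxt) + (S + (P - Pb)/r)*rt)
       + ((rx*U + r*ux)*(U + B*rx)^2/2 + r*U*(U + B*rx)*(ux + (\<alpha>-2)*B1*rx*rx + B*rxx)
          + ux*(r*S + P - Pb) + U*((S + (P - Pb)/r)*rx + \<gamma>*P1*rx))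
     = (rt + (rx*U + r*ux))*(U + B*rx)^2/2
       + (U + B*rx) * (r*((ut + (\<alpha>-2)*B1*rt*rx + B*rxt) + U*(ux + (\<alpha>-2)*B1*rx*rx + B*rxx)))
       + ((S + (P - Pb)/r)*rt + ux*(r*S + P - Pb) + U*((S + (P - Pb)/r)*rx + \<gamma>*P1*rx))"
    by (simp add: algebra_simps)
  also have "\<dots> = (U + B*rx) * (-(\<gamma>*P1*rx)) + \<gamma>*P1*rx*U"
    unfolding k pressure by (simp add: rt)
  also have "\<dots> = -(\<gamma>*P1*B*rx^2)" by (simp add: algebra_simps power2_eq_square)
  finally show ?thesis .
qed

text \<open>Here \<open>R\<^sup>2 = r Q\<^sup>2\<close> encodes \<open>(\<rho>\<^sup>\<alpha>\<^sup>-\<^sup>3\<^sup>/\<^sup>2)\<^sup>2 = \<rho>(\<rho>\<^sup>\<alpha>\<^sup>-\<^sup>2)\<^sup>2\<close>, so that \<open>(R\<rho>\<^sub>x)\<^sup>2 = \<rho>(Q\<rho>\<^sub>x)\<^sup>2\<close> is the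
  gradient part of \<open>\<rho>v\<^sup>2\<close>.\<close>

lemma square_sum_le: "(x + y)^2 \<le> 2 * x^2 + 2 * (y::real)^2"
  using sum_squares_bound[of x y] by (simp add: power2_eq_square algebra_simps)

text \<open>Initial energies are controlled by the initial functional of the theorem
  (\<open>a = \<alpha> - 1/2\<close> is the exponent of \<open>\<rho>\<^sup>\<alpha>\<^sup>-\<^sup>1\<^sup>/\<^sup>2\<close>).\<close>

lemma energies_le_initial_functional:
  fixes r S U Q R rx a :: real
  assumes r: "r > 0" and S: "S \<ge> 0" and a: "a \<noteq> 0" and R: "R^2 = r * Q^2"
  shows "r*U^2/2 + r*S + (r*(U + Q*rx)^2/2 + r*S)
    \<le> (2 + 1/a^2) * (r*\<bar>U\<bar>^2 + (a*R*rx)^2 + r*S)"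
proof -
  have a2: "a^2 > 0" using a by simp
  have e: "(a*R*rx)^2 = a^2 * (r * (Q*rx)^2)" using R by (simp add: power_mult_distrib)
  have "r*(U + Q*rx)^2 \<le> r*(2*U^2 + 2*(Q*rx)^2)"
    using r square_sum_le[of U "Q*rx"] by (intro mult_left_mono) auto
  then have l: "r*U^2/2 + r*S + (r*(U + Q*rx)^2/2 + r*S) \<le> 3/2*(r*U^2) + r*(Q*rx)^2 + 2*(r*S)"
    by (simp add: algebra_simps)
  have p: "0 \<le> r*U^2" "0 \<le> r*(Q*rx)^2" "0 \<le> r*S" using r S by auto
  have "3/2*(r*U^2) \<le> (2 + 1/a^2) * (r*U^2)" using p a2 by (intro mult_right_mono) auto
  moreover have "(2 + 1/a^2) * (a^2 * (r * (Q*rx)^2)) = 2*a^2 * (r*(Q*rx)^2) + r*(Q*rx)^2"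
    using a2 by (simp add: field_simps)
  then have "r*(Q*rx)^2 \<le> (2 + 1/a^2) * (a^2 * (r * (Q*rx)^2))"
    using p a2 by simp
  moreover have "2*(r*S) \<le> (2 + 1/a^2) * (r*S)" using p a2 by (intro mult_right_mono) auto
  ultimately have "3/2*(r*U^2) + r*(Q*rx)^2 + 2*(r*S)
      \<le> (2 + 1/a^2) * (r*U^2) + (2 + 1/a^2) * (a^2 * (r * (Q*rx)^2)) + (2 + 1/a^2) * (r*S)"
    by linarith
  then have "3/2*(r*U^2) + r*(Q*rx)^2 + 2*(r*S)
      \<le> (2 + 1/a^2) * (r*U^2 + a^2 * (r * (Q*rx)^2) + r*S)"
    by (simp only: distrib_left)
  then show ?thesis unfolding e power2_abs using l by linarith
qed

lemma functional_le_energies: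
  fixes r S U Q R rx :: real
  assumes r: "r > 0" and S: "S \<ge> 0" and R: "R^2 = r * Q^2"
  shows "r*\<bar>U\<bar>^2 + (R*rx)^2 + r*S \<le> 7 * (r*U^2/2 + r*S + (r*(U + Q*rx)^2/2 + r*S))"
proof -
  have e: "(R*rx)^2 = r * (Q*rx)^2" using R by (simp add: power_mult_distrib)
  have "(Q*rx)^2 \<le> 2*(U + Q*rx)^2 + 2*U^2" using square_sum_le[of "U + Q*rx" "-U"] by simp
  then have "r*(Q*rx)^2 \<le> r*(2*(U + Q*rx)^2 + 2*U^2)"
    using r by (intro mult_left_mono) auto
  moreover have "r*(2*(U + Q*rx)^2 + 2*U^2) = 2*(r*(U + Q*rx)^2) + 2*(r*U^2)"
    by (simp add: algebra_simps)
  moreover have "0 \<le> r*(U + Q*rx)^2" "0 \<le> r*U^2" "0 \<le> r*S" using r S by auto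
  moreover have "7 * (r*U^2/2 + r*S + (r*(U + Q*rx)^2/2 + r*S))
      = 7/2*(r*U^2) + 14*(r*S) + 7/2*(r*(U + Q*rx)^2)"
    by (simp add: algebra_simps)
  moreover have "r*\<bar>U\<bar>^2 = r*U^2" by simp
  ultimately show ?thesis using e by linarith
qed

text \<open>The dissipation of the theorem is controlled by \<open>D\<^sub>1 + D\<^sub>2\<close>; \<open>R\<^sup>2 = P1Q\<close> encodes
  \<open>(\<rho>\<^sup>(\<^sup>\<alpha>\<^sup>+\<^sup>\<gamma>\<^sup>-\<^sup>3\<^sup>)\<^sup>/\<^sup>2)\<^sup>2 = \<rho>\<^sup>\<gamma>\<^sup>-\<^sup>1\<rho>\<^sup>\<alpha>\<^sup>-\<^sup>2\<close>.\<close>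

lemma dissipation_functional_le:
  fixes A ux P1Q R b rx \<gamma> :: real
  assumes A: "A \<ge> 0" and P: "P1Q \<ge> 0" and g: "\<gamma> > 0" and R: "R^2 = P1Q"
  shows "A*ux^2 + (b*R*rx)^2 \<le> (1 + b^2/\<gamma>) * (A*ux^2 + \<gamma>*P1Q*rx^2)"
proof -
  have e: "(b*R*rx)^2 = b^2/\<gamma> * (\<gamma>*P1Q*rx^2)" using R g by (simp add: power_mult_distrib)
  have "0 \<le> A*ux^2" "0 \<le> \<gamma>*P1Q*rx^2" "0 \<le> b^2/\<gamma> * (A*ux^2)" using A P g by auto
  then show ?thesis unfolding e by (simp add: algebra_simps)
qed

lemma powr_gradient_square:
  fixes r \<alpha> :: real
  assumes r: "r > 0"
  shows "(r powr (\<alpha> - 1/2 - 1))^2 = r * (r powr (\<alpha> - 2))^2"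
proof -
  have "(r powr (\<alpha> - 1/2 - 1))^2 = r powr ((\<alpha> - 1/2 - 1) + (\<alpha> - 1/2 - 1))"
    unfolding power2_eq_square by (rule powr_add[symmetric])
  also have "\<dots> = r powr (1 + ((\<alpha> - 2) + (\<alpha> - 2)))" by (simp add: algebra_simps)
  also have "\<dots> = r * (r powr (\<alpha> - 2))^2" using r unfolding powr_add power2_eq_square by simp
  finally show ?thesis .
qed

lemma powr_pressure_gradient_square:
  fixes r \<alpha> \<gamma> :: real
  shows "(r powr ((\<alpha> + \<gamma> - 1) / 2 - 1))^2 = r powr (\<gamma> - 1) * r powr (\<alpha> - 2)"
proof -
  have "(r powr ((\<alpha> + \<gamma> - 1) / 2 - 1))^2 = r powr (((\<alpha> + \<gamma> - 1) / 2 - 1) + ((\<alpha> + \<gamma> - 1) / 2 - 1))"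
    unfolding power2_eq_square by (rule powr_add[symmetric])
  also have "\<dots> = r powr ((\<gamma> - 1) + (\<alpha> - 2))"
    by (rule arg_cong[where f="\<lambda>e. r powr e"]) (simp add: field_simps)
  also have "\<dots> = r powr (\<gamma> - 1) * r powr (\<alpha> - 2)" by (rule powr_add)
  finally show ?thesis .
qed

definition initial_constant :: "real \<Rightarrow> real" where
  "initial_constant \<alpha> = 2 + 1 / (\<alpha> - 1/2)^2"

definition dissipation_constant :: "real \<Rightarrow> real \<Rightarrow> real" where
  "dissipation_constant \<alpha> \<gamma> = 1 + ((\<alpha> + \<gamma> - 1) / 2)^2 / \<gamma>"

lemma initial_constant_pos: "initial_constant \<alpha> > 0"
  unfolding initial_constant_def by (simp add: add_pos_nonneg)

lemma dissipation_constant_pos: "\<gamma> > 0 \<Longrightarrow> dissipation_constant \<alpha> \<gamma> > 0"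
  unfolding dissipation_constant_def by (simp add: add_pos_nonneg)

locale ns_solution =
  fixes \<alpha> \<gamma> rb T :: real and \<rho> u :: "real \<Rightarrow> real \<Rightarrow> real"
  assumes gamma_gt_1: "\<gamma> > 1" and alpha_lt_half: "\<alpha> < 1/2" and rb: "rb \<ge> 0"
    and smooth_rho: "smooth2 \<rho>" and smooth_u: "smooth2 u"
    and pos: "\<And>x t. t \<in> {0..T} \<Longrightarrow> \<rho> x t > 0"
    and ns: "NS_solution \<alpha> \<gamma> T \<rho> u"
    and boundary: "boundary_terms_vanish \<alpha> \<gamma> rb T \<rho> u"
begin

lemma rho_dx: "((\<lambda>y. \<rho> y s) has_real_derivative px \<rho> x s) (at x)"
  using smooth2_has_px[OF smooth_rho, where w="[]"] by simp
lemma rho_dxx: "((\<lambda>y. px \<rho> y s) has_real_derivative px (px \<rho>) x s) (at x)"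
  using smooth2_has_px[OF smooth_rho, where w="[True]"] by simp
lemma rho_dxxx: "((\<lambda>y. px (px \<rho>) y s) has_real_derivative px (px (px \<rho>)) x s) (at x)"
  using smooth2_has_px[OF smooth_rho, where w="[True, True]"] by simp
lemma rho_dt: "((\<lambda>s. \<rho> x s) has_real_derivative pt \<rho> x s) (at s)"
  using smooth2_has_pt[OF smooth_rho, where w="[]"] by simp
lemma rho_dxt: "((\<lambda>s. px \<rho> x s) has_real_derivative pt (px \<rho>) x s) (at s)"
  using smooth2_has_pt[OF smooth_rho, where w="[True]"] by simp
lemma u_dx: "((\<lambda>y. u y s) has_real_derivative px u x s) (at x)"
  using smooth2_has_px[OF smooth_u, where w="[]"] by simp
lemma u_dxx: "((\<lambda>y. px u y s) has_real_derivative px (px u) x s) (at x)"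
  using smooth2_has_px[OF smooth_u, where w="[True]"] by simp
lemma u_dxxx: "((\<lambda>y. px (px u) y s) has_real_derivative px (px (px u)) x s) (at x)"
  using smooth2_has_px[OF smooth_u, where w="[True, True]"] by simp
lemma u_dt: "((\<lambda>s. u x s) has_real_derivative pt u x s) (at s)"
  using smooth2_has_pt[OF smooth_u, where w="[]"] by simp

lemma powr_rho_dx:
  "s \<in> {0..T} \<Longrightarrow> ((\<lambda>y. \<rho> y s powr c) has_real_derivative c * \<rho> x s powr (c - 1) * px \<rho> x s) (at x)"
  using DERIV_fun_powr[OF rho_dx pos] by simp
lemma powr_rho_dt:
  "s \<in> {0..T} \<Longrightarrow> ((\<lambda>s. \<rho> x s powr c) has_real_derivative c * \<rho> x s powr (c - 1) * pt \<rho> x s) (at s)"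
  using DERIV_fun_powr[OF rho_dt pos] by simp

lemma potential_dx: "s \<in> {0..T} \<Longrightarrow>
    ((\<lambda>y. Gd \<gamma> rb \<rho> y s) has_real_derivative potential_deriv \<gamma> rb (\<rho> x s) * px \<rho> x s) (at x)"
  unfolding Gd_def using DERIV_chain2[OF potential_has_derivative[OF gamma_gt_1 rb pos] rho_dx] by simp
lemma potential_dt: "s \<in> {0..T} \<Longrightarrow>
    ((\<lambda>s. Gd \<gamma> rb \<rho> x s) has_real_derivative potential_deriv \<gamma> rb (\<rho> x s) * pt \<rho> x s) (at s)"
  unfolding Gd_def using DERIV_chain2[OF potential_has_derivative[OF gamma_gt_1 rb pos] rho_dt] by simp

lemma continuity_expanded:
  assumes s: "s \<in> {0..T}"
  shows "pt \<rho> x s = - (px \<rho> x s * u x s + \<rho> x s * px u x s)"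
proof -
  have "px (\<lambda>x t. \<rho> x t * u x t) x s = px \<rho> x s * u x s + \<rho> x s * px u x s"
    by (rule px_eqI) (rule derivative_eq_intros rho_dx u_dx refl | simp)+
  moreover have "pt \<rho> x s + px (\<lambda>x t. \<rho> x t * u x t) x s = 0"
    using ns s unfolding NS_solution_def by blast
  ultimately show ?thesis by linarith
qed

lemma momentum_expanded:
  assumes s: "s \<in> {0..T}"
  shows "pt \<rho> x s * u x s + \<rho> x s * pt u x s + px \<rho> x s * (u x s)\<^sup>2
     + 2 * \<rho> x s * u x s * px u x s + \<gamma> * \<rho> x s powr (\<gamma> - 1) * px \<rho> x s
   = \<alpha> * \<rho> x s powr (\<alpha> - 1) * px \<rho> x s * px u x s + \<rho> x s powr \<alpha> * px (px u) x s"
proof -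
  have 1: "pt (\<lambda>x t. \<rho> x t * u x t) x s = pt \<rho> x s * u x s + \<rho> x s * pt u x s"
    by (rule pt_eqI) (rule derivative_eq_intros rho_dt u_dt refl | simp)+
  have 2: "px (\<lambda>x t. \<rho> x t * (u x t)\<^sup>2 + \<rho> x t powr \<gamma>) x s
      = px \<rho> x s * (u x s)\<^sup>2 + 2 * \<rho> x s * u x s * px u x s + \<gamma> * \<rho> x s powr (\<gamma> - 1) * px \<rho> x s"
    by (rule px_eqI) (rule derivative_eq_intros rho_dx u_dx powr_rho_dx[OF s] refl | simp)+
  have 3: "px (\<lambda>x t. \<rho> x t powr \<alpha> * px u x t) x s
      = \<alpha> * \<rho> x s powr (\<alpha> - 1) * px \<rho> x s * px u x s + \<rho> x s powr \<alpha> * px (px u) x s"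
    by (rule px_eqI) (rule derivative_eq_intros u_dxx powr_rho_dx[OF s] refl | simp)+
  have "pt (\<lambda>x t. \<rho> x t * u x t) x s + px (\<lambda>x t. \<rho> x t * (u x t)\<^sup>2 + \<rho> x t powr \<gamma>) x s
      = px (\<lambda>x t. \<rho> x t powr \<alpha> * px u x t) x s"
    using ns s unfolding NS_solution_def by blast
  then show ?thesis unfolding 1 2 3 by simp
qed

lemma continuity_dx:
  assumes s: "s \<in> {0..T}"
  shows "pt (px \<rho>) x s = -(px (px \<rho>) x s * u x s + 2 * px \<rho> x s * px u x s + \<rho> x s * px (px u) x s)"
proof -
  have fe: "(\<lambda>y. pt \<rho> y s) = (\<lambda>y. - (px \<rho> y s * u y s + \<rho> y s * px u y s))"
    using continuity_expanded[OF s] by auto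
  have "px (pt \<rho>) x s = -(px (px \<rho>) x s * u x s + 2 * px \<rho> x s * px u x s + \<rho> x s * px (px u) x s)"
    by (rule px_eqI, unfold fe) (rule derivative_eq_intros rho_dx u_dx rho_dxx u_dxx refl | simp)+
  then show ?thesis using smooth2_mixed_partials[OF smooth_rho] by simp
qed

definition "energy = (\<lambda>x t. \<rho> x t * (u x t)\<^sup>2 / 2 + Gd \<gamma> rb \<rho> x t)"
definition "bd_energy = (\<lambda>x t. \<rho> x t * (BDv \<alpha> \<rho> u x t)\<^sup>2 / 2 + Gd \<gamma> rb \<rho> x t)"
definition "energy_flux = (\<lambda>x t. \<rho> x t * (u x t)^3 / 2
                    + u x t * (Gd \<gamma> rb \<rho> x t + \<rho> x t powr \<gamma> - rb powr \<gamma>)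
                    - \<rho> x t powr \<alpha> * u x t * px u x t)"
definition "bd_flux = (\<lambda>x t. \<rho> x t * u x t * (BDv \<alpha> \<rho> u x t)\<^sup>2 / 2
                    + u x t * (Gd \<gamma> rb \<rho> x t + \<rho> x t powr \<gamma> - rb powr \<gamma>))"

definition "bdv_dt x s = pt u x s + (\<alpha> - 2) * \<rho> x s powr (\<alpha> - 2 - 1) * pt \<rho> x s * px \<rho> x s
   + \<rho> x s powr (\<alpha> - 2) * pt (px \<rho>) x s"
definition "bdv_dx x s = px u x s + (\<alpha> - 2) * \<rho> x s powr (\<alpha> - 2 - 1) * px \<rho> x s * px \<rho> x s
   + \<rho> x s powr (\<alpha> - 2) * px (px \<rho>) x s"

definition "energy_dt x s = pt \<rho> x s * (u x s)^2/2 + \<rho> x s * u x s * pt u x s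
   + potential_deriv \<gamma> rb (\<rho> x s) * pt \<rho> x s"
definition "bd_energy_dt x s = pt \<rho> x s * (BDv \<alpha> \<rho> u x s)^2/2 + \<rho> x s * BDv \<alpha> \<rho> u x s * bdv_dt x s
   + potential_deriv \<gamma> rb (\<rho> x s) * pt \<rho> x s"
definition "energy_flux_dx x s = px \<rho> x s * (u x s)^3/2 + \<rho> x s * (3 * (u x s)^2 * px u x s)/2
   + px u x s * (Gd \<gamma> rb \<rho> x s + \<rho> x s powr \<gamma> - rb powr \<gamma>)
   + u x s * (potential_deriv \<gamma> rb (\<rho> x s) * px \<rho> x s + \<gamma> * \<rho> x s powr (\<gamma> - 1) * px \<rho> x s)
   - (\<alpha> * \<rho> x s powr (\<alpha> - 1) * px \<rho> x s * u x s * px u x s + \<rho> x s powr \<alpha> * px u x s * px u x s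
      + \<rho> x s powr \<alpha> * u x s * px (px u) x s)"
definition "bd_flux_dx x s = (px \<rho> x s * u x s + \<rho> x s * px u x s) * (BDv \<alpha> \<rho> u x s)^2/2
   + \<rho> x s * u x s * BDv \<alpha> \<rho> u x s * bdv_dx x s
   + px u x s * (Gd \<gamma> rb \<rho> x s + \<rho> x s powr \<gamma> - rb powr \<gamma>)
   + u x s * (potential_deriv \<gamma> rb (\<rho> x s) * px \<rho> x s + \<gamma> * \<rho> x s powr (\<gamma> - 1) * px \<rho> x s)"

definition "dissipation x s = \<rho> x s powr \<alpha> * (px u x s)\<^sup>2
   + \<gamma> * \<rho> x s powr (\<gamma> - 1) * \<rho> x s powr (\<alpha> - 2) * (px \<rho> x s)\<^sup>2"

lemma energy_has_dt: "s \<in> {0..T} \<Longrightarrow> ((\<lambda>s. energy x s) has_real_derivative energy_dt x s) (at s)"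
  unfolding energy_def energy_dt_def
  by (rule derivative_eq_intros rho_dt u_dt potential_dt refl | simp)+

lemma bdv_has_dt: "s \<in> {0..T} \<Longrightarrow> ((\<lambda>s. BDv \<alpha> \<rho> u x s) has_real_derivative bdv_dt x s) (at s)"
  unfolding BDv_def bdv_dt_def
  by (rule derivative_eq_intros rho_dt u_dt rho_dxt powr_rho_dt refl | simp)+

lemma bdv_has_dx: "s \<in> {0..T} \<Longrightarrow> ((\<lambda>y. BDv \<alpha> \<rho> u y s) has_real_derivative bdv_dx x s) (at x)"
  unfolding BDv_def bdv_dx_def
  by (rule derivative_eq_intros rho_dx u_dx rho_dxx powr_rho_dx refl | simp)+

lemma bd_energy_has_dt: "s \<in> {0..T} \<Longrightarrow> ((\<lambda>s. bd_energy x s) has_real_derivative bd_energy_dt x s) (at s)"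
  unfolding bd_energy_def bd_energy_dt_def
  by (rule derivative_eq_intros rho_dt bdv_has_dt potential_dt refl | simp)+

lemma energy_flux_has_dx: "s \<in> {0..T} \<Longrightarrow> ((\<lambda>y. energy_flux y s) has_real_derivative energy_flux_dx x s) (at x)"
  unfolding energy_flux_def energy_flux_dx_def
  apply (rule derivative_eq_intros rho_dx u_dx u_dxx potential_dx powr_rho_dx refl | simp add: pos)+
  apply (simp add: field_simps power2_eq_square power3_eq_cube)
  done

lemma bd_flux_has_dx: "s \<in> {0..T} \<Longrightarrow> ((\<lambda>y. bd_flux y s) has_real_derivative bd_flux_dx x s) (at x)"
  unfolding bd_flux_def bd_flux_dx_def
  by (rule derivative_eq_intros rho_dx u_dx bdv_has_dx potential_dx powr_rho_dx refl | simp add: pos)+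

lemma energy_balance_pointwise:
  assumes s: "s \<in> {0..T}"
  shows "energy_dt x s + energy_flux_dx x s = -(\<rho> x s powr \<alpha> * (px u x s)\<^sup>2)"
  unfolding energy_dt_def energy_flux_dx_def potential_deriv_def Gd_def
  by (rule energy_identity_algebra[OF pos[OF s] continuity_expanded[OF s] momentum_expanded[OF s]])

lemma bd_entropy_balance_pointwise:
  assumes s: "s \<in> {0..T}"
  shows "bd_energy_dt x s + bd_flux_dx x s
     = -(\<gamma> * \<rho> x s powr (\<gamma> - 1) * \<rho> x s powr (\<alpha> - 2) * (px \<rho> x s)\<^sup>2)"
proof -
  have r: "\<rho> x s > 0" using pos[OF s] .
  have peel: "\<rho> x s powr c = \<rho> x s * \<rho> x s powr (c - 1)" for c
    using r by (simp add: powr_diff)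
  show ?thesis
    unfolding bd_energy_dt_def bd_flux_dx_def potential_deriv_def Gd_def bdv_dt_def bdv_dx_def BDv_def
    by (rule bd_entropy_identity_algebra[OF r continuity_expanded[OF s] continuity_dx[OF s]
          momentum_expanded[OF s] peel peel[of "\<alpha> - 1", simplified] peel])
qed

lemma dissipation_nonneg: "s \<in> {0..T} \<Longrightarrow> 0 \<le> dissipation x s"
  unfolding dissipation_def using gamma_gt_1 by (intro add_nonneg_nonneg mult_nonneg_nonneg) auto

lemma energies_nonneg: "s \<in> {0..T} \<Longrightarrow> 0 \<le> energy x s + bd_energy x s"
  unfolding energy_def bd_energy_def Gd_def
  using pos[of s x] Psi_nonneg[OF gamma_gt_1 rb pos[of s x]] by auto

lemma isCont_blocks:
  assumes s: "s \<in> {0..T}"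
  shows "isCont (\<lambda>y. \<rho> y s) x" "isCont (\<lambda>y. px \<rho> y s) x" "isCont (\<lambda>y. px (px \<rho>) y s) x"
    "isCont (\<lambda>y. u y s) x" "isCont (\<lambda>y. px u y s) x" "isCont (\<lambda>y. px (px u) y s) x"
    "isCont (\<lambda>y. \<rho> y s powr c) x" "isCont (\<lambda>y. Psi \<gamma> (\<rho> y s) rb) x"
  using DERIV_isCont[OF rho_dx] DERIV_isCont[OF rho_dxx] DERIV_isCont[OF rho_dxxx]
    DERIV_isCont[OF u_dx] DERIV_isCont[OF u_dxx] DERIV_isCont[OF u_dxxx]
    DERIV_isCont[OF powr_rho_dx[OF s]]
    isCont_o2[OF DERIV_isCont[OF rho_dx] DERIV_isCont[OF Psi_has_derivative[OF gamma_gt_1 rb pos[OF s]]]]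
  by blast+

lemma flux_dx_isCont:
  assumes s: "s \<in> {0..T}"
  shows "isCont (\<lambda>y. energy_flux_dx y s + bd_flux_dx y s) x"
  unfolding energy_flux_dx_def bd_flux_dx_def bdv_dx_def BDv_def potential_deriv_def Gd_def
  by (intro continuous_intros isCont_blocks[OF s]) (use pos[OF s, of x] in auto)

lemma energies_measurable:
  assumes s: "s \<in> {0..T}"
  shows "(\<lambda>y. energy y s + bd_energy y s) \<in> borel_measurable lborel"
proof -
  have "isCont (\<lambda>y. energy y s + bd_energy y s) x" for x
    unfolding energy_def bd_energy_def Gd_def BDv_def
    by (intro continuous_intros isCont_blocks[OF s]) (use pos[OF s, of x] in auto)
  then have "(\<lambda>y. energy y s + bd_energy y s) \<in> borel_measurable borel"
    by (intro borel_measurable_continuous_onI continuous_at_imp_continuous_on) auto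
  then show ?thesis by simp
qed

lemma boundary_conditions:
  shows "\<forall>t\<in>{0..T}. ((\<lambda>x. energy_flux x t) \<longlongrightarrow> 0) at_top \<and> ((\<lambda>x. energy_flux x t) \<longlongrightarrow> 0) at_bot
                   \<and> ((\<lambda>x. bd_flux x t) \<longlongrightarrow> 0) at_top \<and> ((\<lambda>x. bd_flux x t) \<longlongrightarrow> 0) at_bot"
    and "set_integrable lborel (UNIV \<times> {0..T}) (\<lambda>z::real\<times>real. pt energy (fst z) (snd z))"
    and "set_integrable lborel (UNIV \<times> {0..T}) (\<lambda>z::real\<times>real. pt bd_energy (fst z) (snd z))"
    and "set_integrable lborel (UNIV \<times> {0..T}) (\<lambda>z::real\<times>real. px energy_flux (fst z) (snd z))"
    and "set_integrable lborel (UNIV \<times> {0..T}) (\<lambda>z::real\<times>real. px bd_flux (fst z) (snd z))"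
  using boundary unfolding boundary_terms_vanish_def Let_def energy_def bd_energy_def
    energy_flux_def bd_flux_def by simp_all

lemma fluxes_vanish:
  "s \<in> {0..T} \<Longrightarrow> ((\<lambda>x. energy_flux x s + bd_flux x s) \<longlongrightarrow> 0) at_top
     \<and> ((\<lambda>x. energy_flux x s + bd_flux x s) \<longlongrightarrow> 0) at_bot"
  using boundary_conditions(1) by (auto intro: tendsto_add_zero)

lemma energies_dt_integrable:
  "set_integrable lborel (UNIV \<times> {0..T})
     (\<lambda>z::real\<times>real. energy_dt (fst z) (snd z) + bd_energy_dt (fst z) (snd z))"
proof -
  have "set_integrable lborel (UNIV \<times> {0..T})
      (\<lambda>z::real\<times>real. pt energy (fst z) (snd z) + pt bd_energy (fst z) (snd z))"
    using boundary_conditions(2,3) by (rule set_integral_add)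
  then show ?thesis
    by (rule iffD1[OF set_integrable_cong[OF refl refl], rotated])
       (auto simp: pt_eqI[where f=energy, OF energy_has_dt] pt_eqI[where f=bd_energy, OF bd_energy_has_dt])
qed

lemma fluxes_dx_integrable:
  "set_integrable lborel (UNIV \<times> {0..T})
     (\<lambda>z::real\<times>real. energy_flux_dx (fst z) (snd z) + bd_flux_dx (fst z) (snd z))"
proof -
  have "set_integrable lborel (UNIV \<times> {0..T})
      (\<lambda>z::real\<times>real. px energy_flux (fst z) (snd z) + px bd_flux (fst z) (snd z))"
    using boundary_conditions(4,5) by (rule set_integral_add)
  then show ?thesis
    by (rule iffD1[OF set_integrable_cong[OF refl refl], rotated])
       (auto simp: px_eqI[where f=energy_flux, OF energy_flux_has_dx]
         px_eqI[where f=bd_flux, OF bd_flux_has_dx])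
qed

lemma integrated_energy_identity:
  assumes c: "c > 0" and t: "t \<in> {0..T}"
    and fin: "(\<integral>\<^sup>+x. ennreal (c * (energy x 0 + bd_energy x 0)) \<partial>lborel) < \<infinity>"
  shows "(\<integral>\<^sup>+x. ennreal (c * (energy x t + bd_energy x t)) \<partial>lborel)
        + (\<integral>\<^sup>+s\<in>{0..t}. (\<integral>\<^sup>+x. ennreal (c * dissipation x s) \<partial>lborel) \<partial>lborel)
        = (\<integral>\<^sup>+x. ennreal (c * (energy x 0 + bd_energy x 0)) \<partial>lborel)"
proof (rule integrated_balance_law[where T=T
      and g="\<lambda>x s. c * (energy_dt x s + bd_energy_dt x s)"
      and F="\<lambda>x s. c * (energy_flux x s + bd_flux x s)"
      and h="\<lambda>x s. c * (energy_flux_dx x s + bd_flux_dx x s)"])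
  show "0 \<le> t" "t \<le> T" using t by auto
  show "((\<lambda>s. c * (energy x s + bd_energy x s)) has_real_derivative
      c * (energy_dt x s + bd_energy_dt x s)) (at s)" if "s \<in> {0..T}" for x s
    using that by (intro DERIV_cmult DERIV_add energy_has_dt bd_energy_has_dt)
  show "((\<lambda>x. c * (energy_flux x s + bd_flux x s)) has_real_derivative
      c * (energy_flux_dx x s + bd_flux_dx x s)) (at x)" if "s \<in> {0..T}" for x s
    using that by (intro DERIV_cmult DERIV_add energy_flux_has_dx bd_flux_has_dx)
  show "isCont (\<lambda>x. c * (energy_flux_dx x s + bd_flux_dx x s)) x" if "s \<in> {0..T}" for x s
    using that by (intro continuous_intros flux_dx_isCont)
  show "c * (energy_dt x s + bd_energy_dt x s) + c * (energy_flux_dx x s + bd_flux_dx x s)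
      = - (c * dissipation x s)" if "s \<in> {0..T}" for x s
  proof -
    have "c * (energy_dt x s + bd_energy_dt x s) + c * (energy_flux_dx x s + bd_flux_dx x s)
        = c * ((energy_dt x s + energy_flux_dx x s) + (bd_energy_dt x s + bd_flux_dx x s))"
      by (simp add: algebra_simps)
    then show ?thesis
      unfolding energy_balance_pointwise[OF that] bd_entropy_balance_pointwise[OF that] dissipation_def
      by (simp add: algebra_simps)
  qed
  show "0 \<le> c * dissipation x s" if "s \<in> {0..T}" for x s
    using dissipation_nonneg[OF that] c by simp
  show "0 \<le> c * (energy x s + bd_energy x s)" if "s \<in> {0..T}" for x s
    using energies_nonneg[OF that] c by simp
  show "((\<lambda>x. c * (energy_flux x s + bd_flux x s)) \<longlongrightarrow> 0) at_top
      \<and> ((\<lambda>x. c * (energy_flux x s + bd_flux x s)) \<longlongrightarrow> 0) at_bot" if "s \<in> {0..T}" for s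
    using fluxes_vanish[OF that] tendsto_mult_right_zero by blast
  show "set_integrable lborel (UNIV \<times> {0..T})
      (\<lambda>z. c * (energy_dt (fst z) (snd z) + bd_energy_dt (fst z) (snd z)))"
    using energies_dt_integrable by (rule set_integrable_mult_right)
  show "set_integrable lborel (UNIV \<times> {0..T})
      (\<lambda>z. c * (energy_flux_dx (fst z) (snd z) + bd_flux_dx (fst z) (snd z)))"
    using fluxes_dx_integrable by (rule set_integrable_mult_right)
  show "(\<lambda>x. c * (energy x s + bd_energy x s)) \<in> borel_measurable lborel" if "s \<in> {0..T}" for s
    using energies_measurable[OF that] by measurable
qed (rule fin)

lemma px_gradient_term: "t \<in> {0..T} \<Longrightarrow>
    px (\<lambda>x t. \<rho> x t powr (\<alpha> - 1/2)) x t = (\<alpha> - 1/2) * \<rho> x t powr (\<alpha> - 1/2 - 1) * px \<rho> x t"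
  by (rule px_eqI[where f="\<lambda>x t. \<rho> x t powr (\<alpha> - 1/2)", OF powr_rho_dx])

lemma px_scaled_gradient_term: "t \<in> {0..T} \<Longrightarrow>
    px (\<lambda>x t. \<rho> x t powr (\<alpha> - 1/2) / (\<alpha> - 1/2)) x t = \<rho> x t powr (\<alpha> - 1/2 - 1) * px \<rho> x t"
  using px_eqI[where f="\<lambda>x t. \<rho> x t powr (\<alpha> - 1/2) / (\<alpha> - 1/2)",
      OF DERIV_cdivide[OF powr_rho_dx]] alpha_lt_half by simp

lemma px_pressure_gradient_term: "t \<in> {0..T} \<Longrightarrow>
    px (\<lambda>x t. \<rho> x t powr ((\<alpha> + \<gamma> - 1) / 2) - rb powr ((\<alpha> + \<gamma> - 1) / 2)) x t
      = (\<alpha> + \<gamma> - 1) / 2 * \<rho> x t powr ((\<alpha> + \<gamma> - 1) / 2 - 1) * px \<rho> x t"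
  using px_eqI[where f="\<lambda>x t. \<rho> x t powr ((\<alpha> + \<gamma> - 1) / 2) - rb powr ((\<alpha> + \<gamma> - 1) / 2)",
      OF DERIV_diff[OF powr_rho_dx DERIV_const]] by simp

lemma functional_le_energies_at:
  assumes t: "t \<in> {0..T}"
  shows "\<rho> x t * \<bar>u x t\<bar>\<^sup>2 + (px (\<lambda>x t. \<rho> x t powr (\<alpha> - 1/2) / (\<alpha> - 1/2)) x t)\<^sup>2
      + \<rho> x t * Psi \<gamma> (\<rho> x t) rb
    \<le> 7 * (energy x t + bd_energy x t)"
proof -
  have r: "\<rho> x t > 0" by (rule pos[OF t])
  show ?thesis
    unfolding px_scaled_gradient_term[OF t] energy_def bd_energy_def Gd_def BDv_def
    using functional_le_energies[where U="u x t" and rx="px \<rho> x t",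
        OF r Psi_nonneg[OF gamma_gt_1 rb r] powr_gradient_square[OF r, of \<alpha>]] by simp
qed

lemma energies_le_initial_functional_at:
  assumes t: "t \<in> {0..T}"
  shows "energy x t + bd_energy x t \<le> initial_constant \<alpha> * (\<rho> x t * \<bar>u x t\<bar>\<^sup>2
      + (px (\<lambda>x t. \<rho> x t powr (\<alpha> - 1/2)) x t)\<^sup>2 + \<rho> x t * Psi \<gamma> (\<rho> x t) rb)"
proof -
  have r: "\<rho> x t > 0" by (rule pos[OF t])
  have a: "\<alpha> - 1/2 \<noteq> 0" using alpha_lt_half by simp
  show ?thesis
    unfolding px_gradient_term[OF t] energy_def bd_energy_def Gd_def BDv_def initial_constant_def
    using energies_le_initial_functional[where U="u x t" and rx="px \<rho> x t",
        OF r Psi_nonneg[OF gamma_gt_1 rb r] a powr_gradient_square[OF r, of \<alpha>]] by simp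
qed

lemma dissipation_functional_le_at: "t \<in> {0..T} \<Longrightarrow>
    \<rho> x t powr \<alpha> * (px u x t)\<^sup>2
      + (px (\<lambda>x t. \<rho> x t powr ((\<alpha> + \<gamma> - 1) / 2) - rb powr ((\<alpha> + \<gamma> - 1) / 2)) x t)\<^sup>2
    \<le> dissipation_constant \<alpha> \<gamma> * dissipation x t"
  unfolding px_pressure_gradient_term dissipation_def dissipation_constant_def
  using dissipation_functional_le[of "\<rho> x t powr \<alpha>" "\<rho> x t powr (\<gamma> - 1) * \<rho> x t powr (\<alpha> - 2)"
      \<gamma> "\<rho> x t powr ((\<alpha> + \<gamma> - 1) / 2 - 1)" "px u x t" "(\<alpha> + \<gamma> - 1) / 2" "px \<rho> x t"]
    gamma_gt_1 powr_pressure_gradient_square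
  by (simp add: mult.assoc)

definition "initial_functional = (\<integral>\<^sup>+ x. ennreal (\<rho> x 0 * \<bar>u x 0\<bar>\<^sup>2
    + (px (\<lambda>x t. \<rho> x t powr (\<alpha> - 1/2)) x 0)\<^sup>2 + \<rho> x 0 * Psi \<gamma> (\<rho> x 0) rb) \<partial>lborel)"

lemma initial_energies_bound:
  assumes T: "0 \<le> T" and c: "c > 0"
  shows "(\<integral>\<^sup>+x. ennreal (c * (energy x 0 + bd_energy x 0)) \<partial>lborel)
    \<le> ennreal (c * initial_constant \<alpha>) * initial_functional"
proof -
  have z: "(0::real) \<in> {0..T}" using T by simp
  define I0 where "I0 x = \<rho> x 0 * \<bar>u x 0\<bar>\<^sup>2 + (px (\<lambda>x t. \<rho> x t powr (\<alpha> - 1/2)) x 0)\<^sup>2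
      + \<rho> x 0 * Psi \<gamma> (\<rho> x 0) rb" for x
  have I0_nonneg: "I0 x \<ge> 0" for x
    unfolding I0_def using pos[OF z, of x] Psi_nonneg[OF gamma_gt_1 rb pos[OF z, of x]] by auto
  have "isCont I0 x" for x
    unfolding I0_def px_gradient_term[OF z]
    by (intro continuous_intros isCont_blocks[OF z])
  then have "I0 \<in> borel_measurable borel"
    by (intro borel_measurable_continuous_onI continuous_at_imp_continuous_on) auto
  then have meas: "(\<lambda>x. ennreal (I0 x)) \<in> borel_measurable lborel" by simp
  have "(\<integral>\<^sup>+x. ennreal (c * (energy x 0 + bd_energy x 0)) \<partial>lborel)
      \<le> (\<integral>\<^sup>+x. ennreal (c * initial_constant \<alpha>) * ennreal (I0 x) \<partial>lborel)"
  proof (rule nn_integral_mono)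
    fix x
    have "c * (energy x 0 + bd_energy x 0) \<le> c * (initial_constant \<alpha> * I0 x)"
      using energies_le_initial_functional_at[OF z, of x] c unfolding I0_def
      by (intro mult_left_mono) auto
    then have "ennreal (c * (energy x 0 + bd_energy x 0)) \<le> ennreal (c * initial_constant \<alpha> * I0 x)"
      by (simp add: mult.assoc ennreal_leI)
    also have "\<dots> = ennreal (c * initial_constant \<alpha>) * ennreal (I0 x)"
      using c initial_constant_pos[of \<alpha>] I0_nonneg[of x] by (intro ennreal_mult) auto
    finally show "ennreal (c * (energy x 0 + bd_energy x 0))
        \<le> ennreal (c * initial_constant \<alpha>) * ennreal (I0 x)" .
  qed
  also have "\<dots> = ennreal (c * initial_constant \<alpha>) * initial_functional"
    unfolding initial_functional_def I0_def[symmetric] by (rule nn_integral_cmult[OF meas])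
  finally show ?thesis .
qed

lemma integrated_energy_bound:
  assumes c: "c > 0" and t: "t \<in> {0..T}" and fin: "initial_functional < \<infinity>"
  shows "(\<integral>\<^sup>+x. ennreal (c * (energy x t + bd_energy x t)) \<partial>lborel)
        + (\<integral>\<^sup>+s\<in>{0..t}. (\<integral>\<^sup>+x. ennreal (c * dissipation x s) \<partial>lborel) \<partial>lborel)
      \<le> ennreal (c * initial_constant \<alpha>) * initial_functional"
proof -
  note init = initial_energies_bound[OF _ c]
  have T: "0 \<le> T" using t by simp
  have "ennreal (c * initial_constant \<alpha>) * initial_functional < \<infinity>"
    using fin by (simp add: ennreal_mult_less_top)
  then have "(\<integral>\<^sup>+x. ennreal (c * (energy x 0 + bd_energy x 0)) \<partial>lborel) < \<infinity>"
    using init[OF T] by (rule le_less_trans[rotated])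
  then show ?thesis using integrated_energy_identity[OF c t] init[OF T] by simp
qed

lemma energy_sup_bound:
  assumes fin: "initial_functional < \<infinity>"
  shows "(SUP t\<in>{0..T}. \<integral>\<^sup>+ x. ennreal (\<rho> x t * \<bar>u x t\<bar>\<^sup>2
            + (px (\<lambda>x t. \<rho> x t powr (\<alpha> - 1/2) / (\<alpha> - 1/2)) x t)\<^sup>2
            + \<rho> x t * Psi \<gamma> (\<rho> x t) rb) \<partial>lborel)
    \<le> ennreal (7 * initial_constant \<alpha>) * initial_functional"
proof (rule SUP_least)
  fix t :: real assume t: "t \<in> {0..T}"
  have "(\<integral>\<^sup>+ x. ennreal (\<rho> x t * \<bar>u x t\<bar>\<^sup>2
          + (px (\<lambda>x t. \<rho> x t powr (\<alpha> - 1/2) / (\<alpha> - 1/2)) x t)\<^sup>2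
          + \<rho> x t * Psi \<gamma> (\<rho> x t) rb) \<partial>lborel)
      \<le> (\<integral>\<^sup>+x. ennreal (7 * (energy x t + bd_energy x t)) \<partial>lborel)"
    by (rule nn_integral_mono) (use functional_le_energies_at[OF t] in \<open>auto intro: ennreal_leI\<close>)
  also have "\<dots> \<le> ennreal (7 * initial_constant \<alpha>) * initial_functional"
    by (rule order_trans[OF add_increasing2[OF zero_le order_refl] integrated_energy_bound[OF _ t fin]])
       simp
  finally show "(\<integral>\<^sup>+ x. ennreal (\<rho> x t * \<bar>u x t\<bar>\<^sup>2
          + (px (\<lambda>x t. \<rho> x t powr (\<alpha> - 1/2) / (\<alpha> - 1/2)) x t)\<^sup>2
          + \<rho> x t * Psi \<gamma> (\<rho> x t) rb) \<partial>lborel)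
      \<le> ennreal (7 * initial_constant \<alpha>) * initial_functional" .
qed

lemma dissipation_integral_bound:
  assumes T: "0 \<le> T" and fin: "initial_functional < \<infinity>"
  shows "(\<integral>\<^sup>+ t\<in>{0..T}. (\<integral>\<^sup>+ x. ennreal (\<rho> x t powr \<alpha> * (px u x t)\<^sup>2
            + (px (\<lambda>x t. \<rho> x t powr ((\<alpha> + \<gamma> - 1) / 2) - rb powr ((\<alpha> + \<gamma> - 1) / 2)) x t)\<^sup>2)
          \<partial>lborel) \<partial>lborel)
    \<le> ennreal (dissipation_constant \<alpha> \<gamma> * initial_constant \<alpha>) * initial_functional"
    (is "?lhs \<le> _")
proof -
  let ?c = "dissipation_constant \<alpha> \<gamma>"
  have c: "?c > 0" using dissipation_constant_pos gamma_gt_1 by simp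
  have "?lhs \<le> (\<integral>\<^sup>+ t\<in>{0..T}. (\<integral>\<^sup>+ x. ennreal (?c * dissipation x t) \<partial>lborel) \<partial>lborel)"
  proof (rule nn_integral_mono)
    fix t :: real
    show "(\<integral>\<^sup>+ x. ennreal (\<rho> x t powr \<alpha> * (px u x t)\<^sup>2
            + (px (\<lambda>x t. \<rho> x t powr ((\<alpha> + \<gamma> - 1) / 2) - rb powr ((\<alpha> + \<gamma> - 1) / 2)) x t)\<^sup>2)
          \<partial>lborel) * indicator {0..T} t
      \<le> (\<integral>\<^sup>+ x. ennreal (?c * dissipation x t) \<partial>lborel) * indicator {0..T} t"
    proof (cases "t \<in> {0..T}")
      case True
      have "(\<integral>\<^sup>+ x. ennreal (\<rho> x t powr \<alpha> * (px u x t)\<^sup>2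
            + (px (\<lambda>x t. \<rho> x t powr ((\<alpha> + \<gamma> - 1) / 2) - rb powr ((\<alpha> + \<gamma> - 1) / 2)) x t)\<^sup>2)
          \<partial>lborel) \<le> (\<integral>\<^sup>+ x. ennreal (?c * dissipation x t) \<partial>lborel)"
        by (intro nn_integral_mono ennreal_leI) (use dissipation_functional_le_at[OF True] in simp)
      then show ?thesis using True by simp
    qed simp
  qed
  also have "\<dots> \<le> ennreal (?c * initial_constant \<alpha>) * initial_functional"
    by (rule order_trans[OF add_increasing[OF zero_le order_refl] integrated_energy_bound[OF c _ fin]])
       (use T in simp)
  finally show ?thesis .
qed

lemma energy_estimate:
  assumes T: "0 \<le> T" and fin: "initial_functional < \<infinity>"
  shows "(SUP t\<in>{0..T}. \<integral>\<^sup>+ x. ennreal (\<rho> x t * \<bar>u x t\<bar>\<^sup>2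
            + (px (\<lambda>x t. \<rho> x t powr (\<alpha> - 1/2) / (\<alpha> - 1/2)) x t)\<^sup>2
            + \<rho> x t * Psi \<gamma> (\<rho> x t) rb) \<partial>lborel)
    + (\<integral>\<^sup>+ t\<in>{0..T}. (\<integral>\<^sup>+ x. ennreal (\<rho> x t powr \<alpha> * (px u x t)\<^sup>2
            + (px (\<lambda>x t. \<rho> x t powr ((\<alpha> + \<gamma> - 1) / 2) - rb powr ((\<alpha> + \<gamma> - 1) / 2)) x t)\<^sup>2)
          \<partial>lborel) \<partial>lborel)
    \<le> ennreal ((7 + dissipation_constant \<alpha> \<gamma>) * initial_constant \<alpha> * enn2real initial_functional)"
proof -
  let ?c = "dissipation_constant \<alpha> \<gamma>" and ?k = "initial_constant \<alpha>"
  define E where "E = enn2real initial_functional"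
  have E: "initial_functional = ennreal E" "E \<ge> 0" using fin by (simp_all add: E_def)
  have c: "?c > 0" "?k > 0" using dissipation_constant_pos gamma_gt_1 initial_constant_pos by auto
  have "ennreal (7 * ?k) * initial_functional + ennreal (?c * ?k) * initial_functional
      = ennreal ((7 + ?c) * ?k * E)"
    unfolding E(1) using c E(2)
    by (simp add: ennreal_mult[symmetric] ennreal_plus[symmetric] algebra_simps del: ennreal_plus)
  then show ?thesis
    using add_mono[OF energy_sup_bound[OF fin] dissipation_integral_bound[OF T fin]]
    unfolding E_def by simp
qed

end

theorem lemma3p1:
  fixes \<alpha> \<gamma> :: real
  assumes "\<gamma> > 1" and "0 < \<alpha>" and "\<alpha> < 1/2"
  shows "\<exists>C :: real \<Rightarrow> real. \<forall>(rb::real) (T::real) (\<rho>::real \<Rightarrow> real \<Rightarrow> real) (u::real \<Rightarrow> real \<Rightarrow> real).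
    rb \<ge> 0 \<longrightarrow> T > 0 \<longrightarrow> smooth2 \<rho> \<longrightarrow> smooth2 u
    \<longrightarrow> (\<forall>x t. t \<in> {0..T} \<longrightarrow> \<rho> x t > 0)
    \<longrightarrow> NS_solution \<alpha> \<gamma> T \<rho> u
    \<longrightarrow> boundary_terms_vanish \<alpha> \<gamma> rb T \<rho> u
    \<longrightarrow> (let E0 = (\<integral>\<^sup>+ x. ennreal (\<rho> x 0 * \<bar>u x 0\<bar>\<^sup>2
                      + (px (\<lambda>x t. \<rho> x t powr (\<alpha> - 1/2)) x 0)\<^sup>2
                      + \<rho> x 0 * Psi \<gamma> (\<rho> x 0) rb) \<partial>lborel)
        in E0 < \<infinity> \<longrightarrow>
          (SUP t\<in>{0..T}. \<integral>\<^sup>+ x. ennreal (\<rho> x t * \<bar>u x t\<bar>\<^sup>2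
                      + (px (\<lambda>x t. \<rho> x t powr (\<alpha> - 1/2) / (\<alpha> - 1/2)) x t)\<^sup>2
                      + \<rho> x t * Psi \<gamma> (\<rho> x t) rb) \<partial>lborel)
          + (\<integral>\<^sup>+ t\<in>{0..T}. (\<integral>\<^sup>+ x. ennreal (\<rho> x t powr \<alpha> * (px u x t)\<^sup>2
                      + (px (\<lambda>x t. \<rho> x t powr ((\<alpha> + \<gamma> - 1) / 2) - rb powr ((\<alpha> + \<gamma> - 1) / 2)) x t)\<^sup>2)
                    \<partial>lborel) \<partial>lborel)
          \<le> ennreal (C (enn2real E0)))"
  apply (intro exI[where x="\<lambda>E. (7 + dissipation_constant \<alpha> \<gamma>) * initial_constant \<alpha> * E"] allI impI)
  subgoal premises hyps for rb T \<rho> u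
  proof -
    interpret ns_solution \<alpha> \<gamma> rb T \<rho> u
      using hyps assms by unfold_locales auto
    show ?thesis
      unfolding Let_def using energy_estimate[unfolded initial_functional_def] hyps(2) by simp
  qed
  done

end
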